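(* Let $n\ge2$, let $\mathcal{P}$ be a distribution on $\mathcal{Z}$, let $\ell:\mathbb{R}^K\times\mathcal{Z}\to[0,1]$, and let $\mathcal{A}:\mathcal{Z}^{n-1}\to\mathbb{R}^K$ be the deterministic algorithm that runs $T$ steps of SGD from a fixed initialization $w_0$ (the same for every training set), $w_{t+1}=G_t(w_t)$, where for every training set every update map $G_t$ is $\gamma$-bounded. For $\sigma>0$ let $\mathcal{A}_{\sigma^2I}(z)=\mathcal{A}(z)+N$, $N\sim\mathcal{N}(0,\sigma^2I_K)$. Then \[ \mathrm{gen}(\mathcal{A}_{\sigma^2I})\le\sqrt{\frac{c_n^2T^2\gamma}{\sigma^2}},\qquad c_n=\frac{n}{n-1}. \]
   Context: An update map $G:\mathbb{R}^K\to\mathbb{R}^K$ is $\gamma$-bounded if $\|G(w)-w\|\le\sqrt\gamma$ for all $w$. With $\mathcal{L}(w)=\mathbb{E}_{Z'\sim\mathcal{P}}\ell(w,Z')$ and $\widehat{\mathcal{L}}(w,z^m)=\frac1m\sum_i\ell(w,z_i)$, $\mathrm{gen}(\mathcal{A}_{\sigma^2I})=|\mathbb{E}[\mathcal{L}(\mathcal{A}_{\sigma^2I}(Z^{n-1}))-\widehat{\mathcal{L}}(\mathcal{A}_{\sigma^2I}(Z^{n-1}),Z^{n-1})]|$, $Z^{n-1}\sim\mathcal{P}^{n-1}$, expectation also over the noise. *)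

theory Defs
  imports "HOL-Probability.Probability"
begin

text \<open>Isotropic Gaussian N(0, sigma^2 I_K) on R^K (K = CARD('k)), given by its
  density with respect to Lebesgue measure; sigma is the standard deviation.\<close>
definition gaussian_iso :: "real \<Rightarrow> (real ^ 'k) measure" where
  "gaussian_iso \<sigma> = density lborel (\<lambda>x. ennreal (\<Prod>i\<in>UNIV. normal_density 0 \<sigma> (x $ i)))"

definition gamma_bounded :: "real \<Rightarrow> ('a::real_normed_vector \<Rightarrow> 'a) \<Rightarrow> bool" where
  "gamma_bounded \<gamma> G \<longleftrightarrow> (\<forall>w. norm (G w - w) \<le> sqrt \<gamma>)"

primrec sgd_iter :: "('s \<Rightarrow> nat \<Rightarrow> 'a \<Rightarrow> 'a) \<Rightarrow> 'a \<Rightarrow> 's \<Rightarrow> nat \<Rightarrow> 'a" where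
  "sgd_iter G w0 s 0 = w0"
| "sgd_iter G w0 s (Suc t) = G s t (sgd_iter G w0 s t)"

definition pop_risk :: "'z measure \<Rightarrow> ('w \<Rightarrow> 'z \<Rightarrow> real) \<Rightarrow> 'w \<Rightarrow> real" where
  "pop_risk P loss w = (\<integral>z. loss w z \<partial>P)"

definition emp_risk :: "('w \<Rightarrow> 'z \<Rightarrow> real) \<Rightarrow> 'w \<Rightarrow> nat \<Rightarrow> (nat \<Rightarrow> 'z) \<Rightarrow> real" where
  "emp_risk loss w m s = (1 / real m) * (\<Sum>i<m. loss w (s i))"

definition gen_noisy :: "'z measure \<Rightarrow> ((real ^ 'k) \<Rightarrow> 'z \<Rightarrow> real) \<Rightarrow> nat
    \<Rightarrow> ((nat \<Rightarrow> 'z) \<Rightarrow> real ^ 'k) \<Rightarrow> real \<Rightarrow> real" where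
  "gen_noisy P loss m A \<sigma> =
     \<bar>\<integral>p. (pop_risk P loss (A (fst p) + snd p) - emp_risk loss (A (fst p) + snd p) m (fst p))
        \<partial>(PiM {..<m} (\<lambda>_. P) \<Otimes>\<^sub>M gaussian_iso \<sigma>)\<bar>"

end

theory Submission
  imports Defs
begin

text \<open>Average over the noise first. For a fixed training set s, the map
  w \<mapsto> E_N[pop_risk(w + N) - emp_risk(w + N, s)] is the Gaussian smoothing of a function
  bounded by 1, hence (1/\<sigma>)-Lipschitz: the L1 distance of two Gaussian densities is controlled
  through their Bhattacharyya coefficient exp(-|a - b|^2/(8\<sigma>^2)). The SGD output stays within
  T sqrt \<gamma> of the data-independent point w0, and at w0 the gap vanishes because the
  empirical risk is unbiased. This gives gen \<le> T sqrt \<gamma> / \<sigma>, which is sharper than the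
  claim since c_n \<ge> 1.\<close>

section \<open>Isotropic Gaussian densities\<close>

definition gaussian_iso_density :: "real \<Rightarrow> real ^ 'k \<Rightarrow> real ^ 'k \<Rightarrow> real" where
  "gaussian_iso_density \<sigma> c x = (\<Prod>i\<in>UNIV. normal_density (c $ i) \<sigma> (x $ i))"

lemma gaussian_iso_density_nonneg: "0 \<le> gaussian_iso_density \<sigma> c x"
  unfolding gaussian_iso_density_def by (intro prod_nonneg) (auto simp: normal_density_nonneg)

lemma borel_measurable_gaussian_iso_density[measurable]:
  "gaussian_iso_density \<sigma> c \<in> borel_measurable borel"
  unfolding gaussian_iso_density_def by measurable

lemma Basis_vec_eq_range_axis: "(Basis :: (real ^ 'k) set) = range (\<lambda>i. axis i 1)"
  by (auto simp: Basis_vec_def)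

lemma prod_Basis_vec: "(\<Prod>b\<in>(Basis :: (real ^ 'k) set). F b) = (\<Prod>i\<in>UNIV. F (axis i 1))"
  unfolding Basis_vec_eq_range_axis
  by (subst prod.reindex) (auto simp: inj_on_def axis_eq_axis)

lemma nn_integral_gaussian_iso_density:
  fixes c :: "real ^ 'k"
  assumes "\<sigma> > 0"
  shows "(\<integral>\<^sup>+x. ennreal (gaussian_iso_density \<sigma> c x) \<partial>lborel) = 1"
proof -
  have "(\<integral>\<^sup>+x. ennreal (gaussian_iso_density \<sigma> c x) \<partial>lborel) =
      (\<integral>\<^sup>+x. (\<Prod>b\<in>Basis. ennreal (normal_density (c \<bullet> b) \<sigma> (x \<bullet> b))) \<partial>lborel)"
    by (simp add: gaussian_iso_density_def prod_Basis_vec inner_axis prod_ennreal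
        normal_density_nonneg)
  also have "\<dots> = (\<Prod>b\<in>(Basis :: (real ^ 'k) set).
      (\<integral>\<^sup>+x. ennreal (normal_density (c \<bullet> b) \<sigma> x) \<partial>lborel))"
    by (rule nn_integral_lborel_prod) auto
  also have "\<dots> = 1"
  proof (intro prod.neutral ballI)
    fix b :: "real ^ 'k"
    interpret prob_space "density lborel (normal_density (c \<bullet> b) \<sigma>)"
      by (rule prob_space_normal_density[OF assms])
    show "(\<integral>\<^sup>+x. ennreal (normal_density (c \<bullet> b) \<sigma> x) \<partial>lborel) = 1"
      using emeasure_space_1 by (simp add: emeasure_density)
  qed
  finally show ?thesis .
qed

lemma integrable_gaussian_iso_density:
  "\<sigma> > 0 \<Longrightarrow> integrable lborel (gaussian_iso_density \<sigma> c)"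
  by (rule integrableI_nonneg)
     (auto simp: gaussian_iso_density_nonneg nn_integral_gaussian_iso_density)

lemma integral_gaussian_iso_density:
  "\<sigma> > 0 \<Longrightarrow> (\<integral>x. gaussian_iso_density \<sigma> c x \<partial>lborel) = 1"
  using nn_integral_eq_integral[OF integrable_gaussian_iso_density, of \<sigma> c]
    nn_integral_gaussian_iso_density[of \<sigma> c]
  by (simp add: gaussian_iso_density_nonneg)

lemma gaussian_iso_eq_density:
  "gaussian_iso \<sigma> = density lborel (\<lambda>x. ennreal (gaussian_iso_density \<sigma> 0 x))"
  unfolding gaussian_iso_def gaussian_iso_density_def by simp

lemma sets_gaussian_iso[measurable_cong]: "sets (gaussian_iso \<sigma>) = sets borel"
  by (simp add: gaussian_iso_def)

lemma prob_space_gaussian_iso: "\<sigma> > 0 \<Longrightarrow> prob_space (gaussian_iso \<sigma>)"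
  by (rule prob_spaceI)
     (simp add: gaussian_iso_eq_density emeasure_density nn_integral_gaussian_iso_density)

lemma distr_gaussian_iso_add:
  fixes a :: "real ^ 'k"
  shows "distr (gaussian_iso \<sigma>) borel ((+) a)
    = density lborel (\<lambda>x. ennreal (gaussian_iso_density \<sigma> a x))"
proof -
  have "density lborel (\<lambda>x. ennreal (gaussian_iso_density \<sigma> a x))
      = density (distr lborel borel ((+) a)) (\<lambda>x. ennreal (gaussian_iso_density \<sigma> a x))"
    by (simp add: lborel_distr_plus)
  also have "\<dots> = distr (density lborel (\<lambda>x. ennreal (gaussian_iso_density \<sigma> a (a + x)))) borel ((+) a)"
    by (rule density_distr) auto
  also have "(\<lambda>x. ennreal (gaussian_iso_density \<sigma> a (a + x)))
      = (\<lambda>x. ennreal (gaussian_iso_density \<sigma> 0 x))"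
    by (simp add: gaussian_iso_density_def normal_density_def)
  finally show ?thesis by (simp add: gaussian_iso_eq_density)
qed

lemma integral_gaussian_iso_add:
  fixes a :: "real ^ 'k" and f :: "real ^ 'k \<Rightarrow> real"
  assumes [measurable]: "f \<in> borel_measurable borel"
  shows "(\<integral>x. f (a + x) \<partial>gaussian_iso \<sigma>) = (\<integral>x. gaussian_iso_density \<sigma> a x * f x \<partial>lborel)"
proof -
  have "(\<integral>x. f (a + x) \<partial>gaussian_iso \<sigma>) = (\<integral>x. f x \<partial>distr (gaussian_iso \<sigma>) borel ((+) a))"
    by (rule integral_distr[symmetric]) (auto simp: gaussian_iso_def)
  also have "\<dots> = (\<integral>x. gaussian_iso_density \<sigma> a x * f x \<partial>lborel)"
    unfolding distr_gaussian_iso_add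
    by (subst integral_density) (auto simp: gaussian_iso_density_nonneg)
  finally show ?thesis .
qed

lemma real_sqrt_prod: "sqrt (\<Prod>i\<in>A. f i) = (\<Prod>i\<in>A. sqrt (f i))"
  by (induction A rule: infinite_finite_induct) (auto simp: real_sqrt_mult)

lemma sqrt_normal_density_mult:
  assumes "\<sigma> > 0"
  shows "sqrt (normal_density \<alpha> \<sigma> t * normal_density \<beta> \<sigma> t)
       = exp (-(\<alpha> - \<beta>)\<^sup>2 / (8 * \<sigma>\<^sup>2)) * normal_density ((\<alpha> + \<beta>) / 2) \<sigma> t"
proof -
  define c where "c = 1 / sqrt (2 * pi * \<sigma>\<^sup>2)"
  define E where "E = -(\<alpha> - \<beta>)\<^sup>2 / (8 * \<sigma>\<^sup>2) + -(t - (\<alpha> + \<beta>) / 2)\<^sup>2 / (2 * \<sigma>\<^sup>2)"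
  have "-(t - \<alpha>)\<^sup>2 / (2 * \<sigma>\<^sup>2) + -(t - \<beta>)\<^sup>2 / (2 * \<sigma>\<^sup>2) = 2 * E"
    using assms by (simp add: E_def field_simps power2_eq_square)
  then have "normal_density \<alpha> \<sigma> t * normal_density \<beta> \<sigma> t = (c * exp E)\<^sup>2"
    unfolding normal_density_def c_def[symmetric]
    by (simp add: power_mult_distrib exp_double[symmetric] mult_ac flip: exp_add) (simp add: power2_eq_square)
  moreover have "c * exp E = exp (-(\<alpha> - \<beta>)\<^sup>2 / (8 * \<sigma>\<^sup>2)) * normal_density ((\<alpha> + \<beta>) / 2) \<sigma> t"
    unfolding normal_density_def c_def E_def exp_add by simp
  moreover have "c \<ge> 0" by (simp add: c_def)
  ultimately show ?thesis by simp
qed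

lemma sqrt_gaussian_iso_density_mult:
  fixes a b :: "real ^ 'k"
  assumes "\<sigma> > 0"
  shows "sqrt (gaussian_iso_density \<sigma> a x * gaussian_iso_density \<sigma> b x)
       = exp (-(norm (a - b))\<^sup>2 / (8 * \<sigma>\<^sup>2)) * gaussian_iso_density \<sigma> ((a + b) /\<^sub>R 2) x"
proof -
  have "exp (-(norm (a - b))\<^sup>2 / (8 * \<sigma>\<^sup>2)) = (\<Prod>i\<in>UNIV. exp (-(a $ i - b $ i)\<^sup>2 / (8 * \<sigma>\<^sup>2)))"
    unfolding power2_norm_eq_inner inner_vec_def
    by (simp add: power2_eq_square exp_sum[symmetric] sum_divide_distrib sum_negf)
  moreover have "sqrt (gaussian_iso_density \<sigma> a x * gaussian_iso_density \<sigma> b x)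
      = (\<Prod>i\<in>UNIV. sqrt (normal_density (a $ i) \<sigma> (x $ i) * normal_density (b $ i) \<sigma> (x $ i)))"
    unfolding gaussian_iso_density_def prod.distrib[symmetric] by (rule real_sqrt_prod)
  ultimately show ?thesis
    using assms
    by (simp add: sqrt_normal_density_mult prod.distrib gaussian_iso_density_def add_divide_distrib)
qed

section \<open>Gaussian smoothing of bounded functions is Lipschitz\<close>

text \<open>AM-GM applied to |p - q| = |\<surd>p - \<surd>q| (\<surd>p + \<surd>q), with weight l.\<close>
lemma abs_diff_le_hellinger:
  fixes p q l :: real
  assumes "0 \<le> p" "0 \<le> q" "l > 0"
  shows "\<bar>p - q\<bar> \<le> l / 2 * (p + q - 2 * sqrt (p * q)) + (p + q) / l"
proof -
  define u v where "u = sqrt p" and "v = sqrt q"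
  have u: "u \<ge> 0" "p = u\<^sup>2" and v: "v \<ge> 0" "q = v\<^sup>2"
    using assms by (auto simp: u_def v_def)
  have "\<bar>p - q\<bar> = \<bar>u - v\<bar> * (u + v)"
  proof -
    have "p - q = (u - v) * (u + v)" using u v by (simp add: power2_eq_square algebra_simps)
    then show ?thesis using u v by (simp add: abs_mult)
  qed
  also have "\<dots> \<le> l / 2 * (u - v)\<^sup>2 + (u + v)\<^sup>2 / (2 * l)"
  proof -
    have "0 \<le> (l * \<bar>u - v\<bar> - (u + v))\<^sup>2 / l" using assms by simp
    also have "\<dots> = l * (u - v)\<^sup>2 - 2 * (\<bar>u - v\<bar> * (u + v)) + (u + v)\<^sup>2 / l"
      using assms by (simp add: power2_eq_square field_simps abs_mult_self_eq)
    finally show ?thesis by (simp add: field_simps)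
  qed
  also have "\<dots> \<le> l / 2 * (p + q - 2 * sqrt (p * q)) + (p + q) / l"
  proof -
    have "0 \<le> (u - v)\<^sup>2" by simp
    then have "(u + v)\<^sup>2 \<le> 2 * (u\<^sup>2 + v\<^sup>2)" by (simp add: power2_eq_square algebra_simps)
    then have "(u + v)\<^sup>2 / (2 * l) \<le> (p + q) / l"
      using u v assms by (simp add: divide_simps)
    moreover have "(u - v)\<^sup>2 = p + q - 2 * sqrt (p * q)"
      using u v by (simp add: real_sqrt_mult power2_eq_square algebra_simps)
    ultimately show ?thesis by simp
  qed
  finally show ?thesis .
qed

lemma gaussian_smoothing_diff_le_weighted:
  fixes a b :: "real ^ 'k" and f :: "real ^ 'k \<Rightarrow> real"
  assumes \<sigma>: "\<sigma> > 0" and l: "l > 0"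
    and [measurable]: "f \<in> borel_measurable borel" and f_bdd: "\<And>x. \<bar>f x\<bar> \<le> 1"
  shows "\<bar>(\<integral>x. f (a + x) \<partial>gaussian_iso \<sigma>) - (\<integral>x. f (b + x) \<partial>gaussian_iso \<sigma>)\<bar>
    \<le> l * (1 - exp (-(norm (a - b))\<^sup>2 / (8 * \<sigma>\<^sup>2))) + 2 / l"
proof -
  let ?p = "gaussian_iso_density \<sigma> a" and ?q = "gaussian_iso_density \<sigma> b"
  define B where "B = exp (-(norm (a - b))\<^sup>2 / (8 * \<sigma>\<^sup>2))"
  have ip: "integrable lborel ?p" and iq: "integrable lborel ?q"
    using \<sigma> by (auto intro: integrable_gaussian_iso_density)
  have ipf: "integrable lborel (\<lambda>x. ?p x * f x)"
    by (rule Bochner_Integration.integrable_bound[OF ip])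
       (auto simp: abs_mult gaussian_iso_density_nonneg f_bdd intro!: mult_left_le)
  have iqf: "integrable lborel (\<lambda>x. ?q x * f x)"
    by (rule Bochner_Integration.integrable_bound[OF iq])
       (auto simp: abs_mult gaussian_iso_density_nonneg f_bdd intro!: mult_left_le)
  have sq: "sqrt (?p x * ?q x) = B * gaussian_iso_density \<sigma> ((a + b) /\<^sub>R 2) x" for x
    using sqrt_gaussian_iso_density_mult[OF \<sigma>] by (simp add: B_def)
  have isq: "integrable lborel (\<lambda>x. sqrt (?p x * ?q x))"
    unfolding sq by (intro integrable_mult_right integrable_gaussian_iso_density \<sigma>)
  let ?R = "\<lambda>x. l / 2 * (?p x + ?q x - 2 * sqrt (?p x * ?q x)) + (?p x + ?q x) / l"
  have "\<bar>(\<integral>x. f (a + x) \<partial>gaussian_iso \<sigma>) - (\<integral>x. f (b + x) \<partial>gaussian_iso \<sigma>)\<bar>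
      = \<bar>\<integral>x. ?p x * f x - ?q x * f x \<partial>lborel\<bar>"
    by (simp add: integral_gaussian_iso_add ipf iqf)
  also have "\<dots> \<le> (\<integral>x. ?R x \<partial>lborel)"
  proof (rule integral_abs_bound_integral)
    fix x
    have "\<bar>?p x * f x - ?q x * f x\<bar> \<le> \<bar>?p x - ?q x\<bar>"
      using f_bdd[of x] by (simp add: abs_mult mult_left_le flip: left_diff_distrib)
    also have "\<dots> \<le> ?R x"
      by (rule abs_diff_le_hellinger[OF gaussian_iso_density_nonneg gaussian_iso_density_nonneg l])
    finally show "\<bar>?p x * f x - ?q x * f x\<bar> \<le> ?R x" .
  qed (use ipf iqf ip iq isq in simp_all)
  also have "\<dots> = l / 2 * (2 - 2 * B) + 2 / l"
  proof -
    have "(\<integral>x. sqrt (?p x * ?q x) \<partial>lborel) = B"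
      unfolding sq by (simp add: integral_gaussian_iso_density[OF \<sigma>])
    then show ?thesis
      using ip iq isq by (simp add: integral_gaussian_iso_density[OF \<sigma>])
  qed
  finally show ?thesis by (simp add: B_def algebra_simps)
qed

lemma gaussian_smoothing_diff_le:
  fixes a b :: "real ^ 'k" and f :: "real ^ 'k \<Rightarrow> real"
  assumes \<sigma>: "\<sigma> > 0"
    and "f \<in> borel_measurable borel" and "\<And>x. \<bar>f x\<bar> \<le> 1"
  shows "\<bar>(\<integral>x. f (a + x) \<partial>gaussian_iso \<sigma>) - (\<integral>x. f (b + x) \<partial>gaussian_iso \<sigma>)\<bar> \<le> norm (a - b) / \<sigma>"
proof (cases "a = b")
  case False
  define d where "d = norm (a - b)"
  have d: "d > 0" using False by (simp add: d_def)
  define l where "l = 4 * \<sigma> / d"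
  have l: "l > 0" using d \<sigma> by (simp add: l_def)
  have "1 - exp (-d\<^sup>2 / (8 * \<sigma>\<^sup>2)) \<le> d\<^sup>2 / (8 * \<sigma>\<^sup>2)"
    using exp_ge_add_one_self[of "-d\<^sup>2 / (8 * \<sigma>\<^sup>2)"] by simp
  then have "l * (1 - exp (-d\<^sup>2 / (8 * \<sigma>\<^sup>2))) + 2 / l \<le> l * (d\<^sup>2 / (8 * \<sigma>\<^sup>2)) + 2 / l"
    using l by (simp only: add_le_cancel_right mult_le_cancel_left_pos)
  also have "\<dots> = d / \<sigma>"
    using d \<sigma> by (simp add: l_def field_simps power2_eq_square)
  finally show ?thesis
    using gaussian_smoothing_diff_le_weighted[OF \<sigma> l assms(2,3), of a b] by (simp add: d_def)
qed simp

section \<open>Risks of a fixed hypothesis\<close>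

lemma (in prob_space) borel_measurable_pop_risk[measurable]:
  assumes "(\<lambda>(w, z). loss w z) \<in> borel_measurable (borel \<Otimes>\<^sub>M M)"
  shows "(\<lambda>w. pop_risk M loss w) \<in> borel_measurable borel"
  unfolding pop_risk_def using assms by (rule borel_measurable_lebesgue_integral)

lemma (in prob_space) pop_risk_in_unit_interval:
  assumes "loss w \<in> borel_measurable M" and "\<And>z. z \<in> space M \<Longrightarrow> loss w z \<in> {0..1}"
  shows "pop_risk M loss w \<in> {0..1}"
proof -
  have "integrable M (loss w)"
    using assms by (intro integrable_const_bound[where B=1] AE_I2) auto
  then have "pop_risk M loss w \<le> (\<integral>z. 1 \<partial>M)"
    unfolding pop_risk_def using assms(2) by (intro integral_mono) auto
  moreover have "0 \<le> pop_risk M loss w"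
    unfolding pop_risk_def using assms(2) by (intro integral_nonneg_AE AE_I2) auto
  ultimately show ?thesis by (simp add: prob_space)
qed

lemma emp_risk_in_unit_interval:
  assumes "\<And>i. i < m \<Longrightarrow> loss w (s i) \<in> {0..1}"
  shows "emp_risk loss w m s \<in> {0..1}"
proof -
  have "(\<Sum>i<m. loss w (s i)) \<le> real m"
    using sum_mono[of "{..<m}" "\<lambda>i. loss w (s i)" "\<lambda>_. 1"] assms by auto
  moreover have "0 \<le> (\<Sum>i<m. loss w (s i))"
    using assms by (intro sum_nonneg) auto
  ultimately show ?thesis by (auto simp: emp_risk_def divide_le_eq_1)
qed

lemma (in prob_space) integrable_component_PiM:
  fixes f :: "'a \<Rightarrow> 'b::{banach, second_countable_topology}"
  assumes "integrable M f" and "i \<in> I"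
  shows "integrable (PiM I (\<lambda>_. M)) (\<lambda>s. f (s i))"
proof -
  have "distr (PiM I (\<lambda>_. M)) M (\<lambda>s. s i) = M"
    using assms(2) by (intro distr_PiM_component) (auto intro: prob_space_axioms)
  then show ?thesis
    using assms integrable_distr_eq[of "\<lambda>s. s i" "PiM I (\<lambda>_. M)" M f] by simp
qed

lemma (in prob_space) integral_component_PiM:
  fixes f :: "'a \<Rightarrow> 'b::{banach, second_countable_topology}"
  assumes "f \<in> borel_measurable M" and "i \<in> I"
  shows "(\<integral>s. f (s i) \<partial>PiM I (\<lambda>_. M)) = (\<integral>z. f z \<partial>M)"
proof -
  have "distr (PiM I (\<lambda>_. M)) M (\<lambda>s. s i) = M"
    using assms(2) by (intro distr_PiM_component) (auto intro: prob_space_axioms)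
  then show ?thesis
    using assms integral_distr[of "\<lambda>s. s i" "PiM I (\<lambda>_. M)" M f] by simp
qed

lemma (in prob_space) integrable_emp_risk_PiM:
  assumes "integrable M (loss w)"
  shows "integrable (PiM {..<m} (\<lambda>_. M)) (emp_risk loss w m)"
  unfolding emp_risk_def using assms
  by (intro integrable_mult_right Bochner_Integration.integrable_sum integrable_component_PiM) auto

text \<open>For m = 0 the empirical risk is 0 (by 1 / 0 = 0), hence the hypothesis m \<ge> 1.\<close>
lemma (in prob_space) integral_emp_risk_PiM:
  assumes "integrable M (loss w)" and "m \<ge> 1"
  shows "(\<integral>s. emp_risk loss w m s \<partial>PiM {..<m} (\<lambda>_. M)) = pop_risk M loss w"
  unfolding emp_risk_def pop_risk_def using assms
  by (simp add: Bochner_Integration.integral_sum integrable_component_PiM integral_component_PiM)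

lemma (in prob_space) abs_risk_gap_le_1:
  assumes "(\<lambda>(w, z). loss w z) \<in> borel_measurable (borel \<Otimes>\<^sub>M M)"
    and "\<And>w z. z \<in> space M \<Longrightarrow> loss w z \<in> {0..1}"
    and "s \<in> space (PiM {..<m} (\<lambda>_. M))"
  shows "\<bar>pop_risk M loss w - emp_risk loss w m s\<bar> \<le> 1"
proof -
  have "loss w \<in> borel_measurable M"
    using assms(1) by measurable
  then have "pop_risk M loss w \<in> {0..1}"
    using assms(2) by (rule pop_risk_in_unit_interval)
  moreover have "emp_risk loss w m s \<in> {0..1}"
    using assms(2,3) by (intro emp_risk_in_unit_interval) (auto simp: space_PiM)
  ultimately show ?thesis by auto
qed

lemma (in prob_space) integral_risk_gap_PiM:
  assumes "integrable M (loss w)" and "m \<ge> 1"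
  shows "(\<integral>s. pop_risk M loss w - emp_risk loss w m s \<partial>PiM {..<m} (\<lambda>_. M)) = 0"
proof -
  interpret S: prob_space "PiM {..<m} (\<lambda>_. M)"
    by (rule prob_space_PiM) (rule prob_space_axioms)
  have "(\<integral>s. pop_risk M loss w - emp_risk loss w m s \<partial>PiM {..<m} (\<lambda>_. M))
      = (\<integral>s. pop_risk M loss w \<partial>PiM {..<m} (\<lambda>_. M))
        - (\<integral>s. emp_risk loss w m s \<partial>PiM {..<m} (\<lambda>_. M))"
    by (rule Bochner_Integration.integral_diff[OF S.integrable_const
          integrable_emp_risk_PiM[of loss w, OF assms(1)]])
  then show ?thesis
    using integral_emp_risk_PiM[of loss w, OF assms] S.prob_space by simp
qed

section \<open>Generalization gap of noisy SGD\<close>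

text \<open>Comparing with the data-independent centre w0, whose contribution vanishes because h is
  centered in s for every fixed w.\<close>
lemma abs_integral_gaussian_perturbed_le:
  fixes h :: "'s \<Rightarrow> real ^ 'k \<Rightarrow> real" and A :: "'s \<Rightarrow> real ^ 'k"
  assumes "prob_space S" and \<sigma>: "\<sigma> > 0"
    and h_meas[measurable]: "(\<lambda>(s, w). h s w) \<in> borel_measurable (S \<Otimes>\<^sub>M borel)"
    and h_bdd: "\<And>s w. s \<in> space S \<Longrightarrow> \<bar>h s w\<bar> \<le> 1"
    and h_centered: "\<And>w. (\<integral>s. h s w \<partial>S) = 0"
    and A_meas[measurable]: "A \<in> borel_measurable S"
    and A_near: "\<And>s. s \<in> space S \<Longrightarrow> norm (A s - w0) \<le> D"
  shows "\<bar>\<integral>p. h (fst p) (A (fst p) + snd p) \<partial>(S \<Otimes>\<^sub>M gaussian_iso \<sigma>)\<bar> \<le> D / \<sigma>"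
proof -
  let ?Q = "gaussian_iso \<sigma>"
  interpret S: prob_space S by fact
  interpret Q: prob_space ?Q using \<sigma> by (rule prob_space_gaussian_iso)
  interpret SQ: pair_prob_space S ?Q ..
  define g where "g a s = (\<integral>x. h s (a s + x) \<partial>?Q)" for a s
  have int_h: "integrable (S \<Otimes>\<^sub>M ?Q) (\<lambda>p. h (fst p) (a (fst p) + snd p))"
    if [measurable]: "a \<in> borel_measurable S" for a :: "'s \<Rightarrow> real ^ 'k"
    by (rule SQ.P.integrable_const_bound[where B=1]) (auto simp: space_pair_measure h_bdd)
  have int_g: "integrable S (g a)" and integral_g:
    "(\<integral>s. g a s \<partial>S) = (\<integral>p. h (fst p) (a (fst p) + snd p) \<partial>(S \<Otimes>\<^sub>M ?Q))"
    if "a \<in> borel_measurable S" for a :: "'s \<Rightarrow> real ^ 'k"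
    using SQ.integrable_fst'[OF int_h[OF that]] SQ.integral_fst'[OF int_h[OF that]]
    by (simp_all add: g_def[abs_def])
  have "(\<integral>s. g (\<lambda>_. w0) s \<partial>S) = (\<integral>x. (\<integral>s. h s (w0 + x) \<partial>S) \<partial>?Q)"
    using SQ.Fubini_integral[of "\<lambda>s x. h s (w0 + x)"] int_h[of "\<lambda>_. w0"]
    by (simp add: g_def case_prod_beta')
  then have centre: "(\<integral>s. g (\<lambda>_. w0) s \<partial>S) = 0"
    by (simp add: h_centered)
  have diff_le: "\<bar>g A s - g (\<lambda>_. w0) s\<bar> \<le> D / \<sigma>" if s: "s \<in> space S" for s
  proof -
    have "(\<lambda>w. h s w) \<in> borel_measurable borel"
      using measurable_Pair_compose_split[OF h_meas measurable_const[OF s] measurable_ident_sets[OF refl]] .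
    then have "\<bar>g A s - g (\<lambda>_. w0) s\<bar> \<le> norm (A s - w0) / \<sigma>"
      unfolding g_def using h_bdd[OF s] by (intro gaussian_smoothing_diff_le[OF \<sigma>])
    also have "\<dots> \<le> D / \<sigma>"
      using A_near[OF s] \<sigma> by (simp add: divide_right_mono)
    finally show ?thesis .
  qed
  have int_gA: "integrable S (g A)" and int_g0: "integrable S (g (\<lambda>_. w0))"
    by (simp_all add: int_g)
  have "\<bar>\<integral>p. h (fst p) (A (fst p) + snd p) \<partial>(S \<Otimes>\<^sub>M ?Q)\<bar> = \<bar>\<integral>s. g A s - g (\<lambda>_. w0) s \<partial>S\<bar>"
    using int_gA int_g0 centre by (simp add: integral_g[symmetric])
  also have "\<dots> \<le> (\<integral>s. \<bar>g A s - g (\<lambda>_. w0) s\<bar> \<partial>S)"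
    by (rule integral_abs_bound)
  also have "\<dots> \<le> (\<integral>s. D / \<sigma> \<partial>S)"
    using int_gA int_g0 diff_le by (intro integral_mono) auto
  finally show ?thesis
    using S.prob_space by simp
qed

lemma gamma_bounded_nonneg: "gamma_bounded \<gamma> G \<Longrightarrow> 0 \<le> \<gamma>"
  unfolding gamma_bounded_def by (metis norm_ge_zero order_trans real_sqrt_ge_0_iff)

lemma norm_sgd_iter_minus_init_le:
  assumes "\<And>t. gamma_bounded \<gamma> (G s t)"
  shows "norm (sgd_iter G w0 s t - w0) \<le> real t * sqrt \<gamma>"
proof (induction t)
  case (Suc t)
  have "norm (sgd_iter G w0 s (Suc t) - w0)
      \<le> norm (G s t (sgd_iter G w0 s t) - sgd_iter G w0 s t) + norm (sgd_iter G w0 s t - w0)"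
    using norm_triangle_ineq[of "G s t (sgd_iter G w0 s t) - sgd_iter G w0 s t" "sgd_iter G w0 s t - w0"]
    by simp
  also have "\<dots> \<le> sqrt \<gamma> + real t * sqrt \<gamma>"
    using assms[of t] Suc by (intro add_mono) (auto simp: gamma_bounded_def)
  finally show ?case by (simp add: algebra_simps)
qed simp

theorem lemma2:
  fixes P :: "'z measure"
    and loss :: "real ^ 'k \<Rightarrow> 'z \<Rightarrow> real"
    and G :: "(nat \<Rightarrow> 'z) \<Rightarrow> nat \<Rightarrow> real ^ 'k \<Rightarrow> real ^ 'k"
    and w0 :: "real ^ 'k"
    and n T :: nat and \<gamma> \<sigma> :: real
  assumes n: "n \<ge> 2"
    and P: "prob_space P"
    and loss_meas: "(\<lambda>(w, z). loss w z) \<in> borel_measurable (borel \<Otimes>\<^sub>M P)"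
    and loss_range: "\<And>w z. z \<in> space P \<Longrightarrow> loss w z \<in> {0..1}"
    and G_bdd: "\<And>s t. s \<in> space (PiM {..<n-1} (\<lambda>_. P)) \<Longrightarrow> gamma_bounded \<gamma> (G s t)"
    and A_meas: "(\<lambda>s. sgd_iter G w0 s T) \<in> borel_measurable (PiM {..<n-1} (\<lambda>_. P))"
    and \<sigma>: "\<sigma> > 0"
  shows "gen_noisy P loss (n-1) (\<lambda>s. sgd_iter G w0 s T) \<sigma>
           \<le> sqrt ((real n / (real n - 1))\<^sup>2 * (real T)\<^sup>2 * \<gamma> / \<sigma>\<^sup>2)"
proof -
  interpret P: prob_space P by (rule P)
  let ?S = "PiM {..<n-1} (\<lambda>_. P)"
  have S: "prob_space ?S" by (rule prob_space_PiM) (rule P)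
  have "\<gamma> \<ge> 0"
    using prob_space.not_empty[OF S] G_bdd gamma_bounded_nonneg by blast
  have "gen_noisy P loss (n-1) (\<lambda>s. sgd_iter G w0 s T) \<sigma> \<le> real T * sqrt \<gamma> / \<sigma>"
    unfolding gen_noisy_def
  proof (rule abs_integral_gaussian_perturbed_le[OF S \<sigma> _ _ _ A_meas])
    show "(\<lambda>(s, w). pop_risk P loss w - emp_risk loss w (n - 1) s) \<in> borel_measurable (?S \<Otimes>\<^sub>M borel)"
      using loss_meas unfolding emp_risk_def by measurable
    show "\<bar>pop_risk P loss w - emp_risk loss w (n - 1) s\<bar> \<le> 1" if "s \<in> space ?S" for s w
      using loss_meas loss_range that by (rule P.abs_risk_gap_le_1)
    show "(\<integral>s. pop_risk P loss w - emp_risk loss w (n - 1) s \<partial>?S) = 0" for w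
      using loss_meas loss_range n
      by (intro P.integral_risk_gap_PiM P.integrable_const_bound[where B=1] AE_I2) auto
    show "norm (sgd_iter G w0 s T - w0) \<le> real T * sqrt \<gamma>" if "s \<in> space ?S" for s
      by (intro norm_sgd_iter_minus_init_le G_bdd that)
  qed
  also have "\<dots> \<le> real n / (real n - 1) * (real T * sqrt \<gamma> / \<sigma>)"
    using n \<sigma> \<open>\<gamma> \<ge> 0\<close> by (simp add: mult_le_cancel_right1 field_simps)
  also have "\<dots> = sqrt ((real n / (real n - 1))\<^sup>2 * (real T)\<^sup>2 * \<gamma> / \<sigma>\<^sup>2)"
    using n \<sigma> by (simp add: real_sqrt_mult real_sqrt_divide)
  finally show ?thesis .
qed

end
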